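(* In the reduction instance $NTP([a_j]_{j\in A},W)$, every optimal schedule $S^*$ satisfies, for every $k\in A$, $b_{i_k}\in\{0,a_k\}$, where $b_{i_k}$ is the number of employees bumped by the critical employee $i_k$ in $S^*$.
   Context: Reduction instance. Let $N\ge1$, $A=\{1,\dots,N\}$, positive integers $a_1,\dots,a_N$, positive integer $W\le\sum_{j\in A}a_j$. Set $M=N+\sum_{j\in A}a_j+1$, employees $\mathcal E=\{1,\dots,M\}$ (smaller index = more senior). For $k\in A$: $i_k=k+\sum_{j=1}^{k-1}a_j$ (critical employees), $\mathcal E^S_k=\{i: i_k<i\le i_k+a_k\}$ (stable block), $\mathcal E^S=\bigcup_k\mathcal E^S_k$. Response delays: $r_{i_k}=\sum_{j=1}^{k}a_j$; for $i\in\mathcal E^S_k$, $r_i=\sum_{j=1}^{k-1}a_j$; $r_M=\sum_{j\in A}a_j$. Let $C^*_0=2\sum_j a_j$ and $H=C^*_0-W$. A schedule $S=(s_i,e_i)_{i\in\mathcal E}$ has $s_i\ge0$, $e_i=s_i+r_i$; it is feasible if $s_1\le\dots\le s_M$ and $e_i\le H$ for all $i$. $b_i=|\{j: i<j,\ e_j<e_i\}|$ (potential bumps caused by $i$), $B(S)=\sum_i b_i$. A schedule is optimal if it is feasible and minimizes $B(S)$ among feasible schedules. *)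

theory Defs
  imports Complex_Main
begin

text \<open>Reduction instance NTP([a_j]_{j in A}, W) with A = {1..N}.
  Employees are 1..M; a schedule is given by start times s :: nat => real
  (only values on {1..M} matter); e_i = s_i + r_i.\<close>

definition psum :: "(nat \<Rightarrow> nat) \<Rightarrow> nat \<Rightarrow> nat" where
  "psum a k = (\<Sum>j=1..k. a j)"

definition numEmp :: "nat \<Rightarrow> (nat \<Rightarrow> nat) \<Rightarrow> nat" where
  "numEmp N a = N + psum a N + 1"

definition crit :: "(nat \<Rightarrow> nat) \<Rightarrow> nat \<Rightarrow> nat" where
  "crit a k = k + psum a (k - 1)"

definition stable_block :: "(nat \<Rightarrow> nat) \<Rightarrow> nat \<Rightarrow> nat set" where
  "stable_block a k = {i. crit a k < i \<and> i \<le> crit a k + a k}"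

definition resp :: "nat \<Rightarrow> (nat \<Rightarrow> nat) \<Rightarrow> nat \<Rightarrow> real" where
  "resp N a i =
     (if \<exists>k\<in>{1..N}. i = crit a k
      then real (psum a (THE k. k \<in> {1..N} \<and> i = crit a k))
      else if \<exists>k\<in>{1..N}. i \<in> stable_block a k
      then real (psum a ((THE k. k \<in> {1..N} \<and> i \<in> stable_block a k) - 1))
      else real (psum a N))"

definition horizon :: "nat \<Rightarrow> (nat \<Rightarrow> nat) \<Rightarrow> nat \<Rightarrow> real" where
  "horizon N a W = real (2 * psum a N) - real W"

definition endt :: "nat \<Rightarrow> (nat \<Rightarrow> nat) \<Rightarrow> (nat \<Rightarrow> real) \<Rightarrow> nat \<Rightarrow> real" where
  "endt N a s i = s i + resp N a i"

definition feasible :: "nat \<Rightarrow> (nat \<Rightarrow> nat) \<Rightarrow> nat \<Rightarrow> (nat \<Rightarrow> real) \<Rightarrow> bool" where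
  "feasible N a W s \<longleftrightarrow>
     (\<forall>i\<in>{1..numEmp N a}. 0 \<le> s i) \<and>
     (\<forall>i\<in>{1..numEmp N a}. \<forall>j\<in>{1..numEmp N a}. i \<le> j \<longrightarrow> s i \<le> s j) \<and>
     (\<forall>i\<in>{1..numEmp N a}. endt N a s i \<le> horizon N a W)"

definition bumps :: "nat \<Rightarrow> (nat \<Rightarrow> nat) \<Rightarrow> (nat \<Rightarrow> real) \<Rightarrow> nat \<Rightarrow> nat" where
  "bumps N a s i = card {j \<in> {1..numEmp N a}. i < j \<and> endt N a s j < endt N a s i}"

definition total_bumps :: "nat \<Rightarrow> (nat \<Rightarrow> nat) \<Rightarrow> (nat \<Rightarrow> real) \<Rightarrow> nat" where
  "total_bumps N a s = (\<Sum>i=1..numEmp N a. bumps N a s i)"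

definition optimal :: "nat \<Rightarrow> (nat \<Rightarrow> nat) \<Rightarrow> nat \<Rightarrow> (nat \<Rightarrow> real) \<Rightarrow> bool" where
  "optimal N a W s \<longleftrightarrow> feasible N a W s \<and>
     (\<forall>s'. feasible N a W s' \<longrightarrow> total_bumps N a s \<le> total_bumps N a s')"

end

theory Submission
  imports Defs
begin

text \<open>Let \<open>c = i\<^sub>k\<close> and let \<open>L = c + a\<^sub>k\<close> be the last employee of the stable block
  \<open>D = {c<..L}\<close>. Stable employees respond \<open>a\<^sub>k\<close> faster than \<open>c\<close>, while every employee after
  \<open>L\<close> responds at least as slowly as \<open>c\<close>. Hence, if \<open>s\<^sub>L < s\<^sub>c + a\<^sub>k\<close>, then \<open>c\<close> bumps exactly
  the block \<open>D\<close>. Otherwise every later start is at least \<open>s\<^sub>c + a\<^sub>k\<close>, and raising the starts in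
  \<open>D\<close> to at least \<open>s\<^sub>c + a\<^sub>k\<close> keeps the schedule feasible (the block then ends with \<open>c\<close>),
  creates no new bumps and removes all bumps of \<open>c\<close>; by optimality \<open>c\<close> bumped nobody.\<close>

lemma psum_mono: "m \<le> n \<Longrightarrow> psum a m \<le> psum a n"
  unfolding psum_def by (rule sum_mono2) auto

lemma psum_pred: "1 \<le> k \<Longrightarrow> psum a k = psum a (k - 1) + a k"
  unfolding psum_def by (cases k) auto

lemma crit_add_eq: "1 \<le> k \<Longrightarrow> crit a k + a k = k + psum a k"
  unfolding crit_def using psum_pred[of k a] by simp

lemma crit_add_less_crit: "1 \<le> k\<^sub>1 \<Longrightarrow> k\<^sub>1 < k\<^sub>2 \<Longrightarrow> crit a k\<^sub>1 + a k\<^sub>1 < crit a k\<^sub>2"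
proof -
  assume "1 \<le> k\<^sub>1" "k\<^sub>1 < k\<^sub>2"
  then have "psum a k\<^sub>1 \<le> psum a (k\<^sub>2 - 1)" by (intro psum_mono) simp
  with \<open>1 \<le> k\<^sub>1\<close> \<open>k\<^sub>1 < k\<^sub>2\<close> show ?thesis using crit_add_eq[of k\<^sub>1 a] unfolding crit_def by simp
qed

lemma crit_less: "1 \<le> k\<^sub>1 \<Longrightarrow> k\<^sub>1 < k\<^sub>2 \<Longrightarrow> crit a k\<^sub>1 < crit a k\<^sub>2"
  using crit_add_less_crit[of k\<^sub>1 k\<^sub>2 a] by simp

lemma crit_inj: "1 \<le> k\<^sub>1 \<Longrightarrow> 1 \<le> k\<^sub>2 \<Longrightarrow> crit a k\<^sub>1 = crit a k\<^sub>2 \<Longrightarrow> k\<^sub>1 = k\<^sub>2"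
  by (metis crit_less less_irrefl linorder_neqE_nat)

lemma stable_block_eq: "stable_block a k = {crit a k<..crit a k + a k}"
  unfolding stable_block_def by auto

lemma crit_notin_stable_block: "1 \<le> k \<Longrightarrow> 1 \<le> k' \<Longrightarrow> crit a k \<notin> stable_block a k'"
proof
  assume k: "1 \<le> k" "1 \<le> k'" and "crit a k \<in> stable_block a k'"
  then have "crit a k' < crit a k" "crit a k \<le> crit a k' + a k'" by (auto simp: stable_block_eq)
  with k show False
    using crit_add_less_crit[of k' k a] crit_less[of k k' a] by (cases k k' rule: linorder_cases) auto
qed

lemma stable_block_unique:
  "1 \<le> k \<Longrightarrow> 1 \<le> k' \<Longrightarrow> i \<in> stable_block a k \<Longrightarrow> i \<in> stable_block a k' \<Longrightarrow> k = k'"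
  unfolding stable_block_eq
  by (metis crit_add_less_crit greaterThanAtMost_iff le_less_trans less_asym linorder_neqE_nat)

lemma stable_block_end_less_numEmp: "k \<in> {1..N} \<Longrightarrow> crit a k + a k < numEmp N a"
  using crit_add_eq[of k a] psum_mono[of k N a] unfolding numEmp_def by simp

lemma resp_crit: "k \<in> {1..N} \<Longrightarrow> resp N a (crit a k) = psum a k"
proof -
  assume k: "k \<in> {1..N}"
  have "(THE k'. k' \<in> {1..N} \<and> crit a k = crit a k') = k"
    using k crit_inj[of k _ a] by (intro the_equality) auto
  with k show ?thesis unfolding resp_def by auto
qed

lemma resp_stable: "k \<in> {1..N} \<Longrightarrow> i \<in> stable_block a k \<Longrightarrow> resp N a i = psum a (k - 1)"
proof -
  assume k: "k \<in> {1..N}" and i: "i \<in> stable_block a k"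
  have "\<not> (\<exists>k'\<in>{1..N}. i = crit a k')"
    using k i crit_notin_stable_block[of _ k a] by auto
  moreover have "(THE k'. k' \<in> {1..N} \<and> i \<in> stable_block a k') = k"
    using k i stable_block_unique[where k=k and a=a and i=i] by (intro the_equality) auto
  ultimately show ?thesis using k i unfolding resp_def by auto
qed

lemma resp_after_stable_block:
  assumes k: "k \<in> {1..N}" and j: "crit a k + a k < j"
  shows "psum a k \<le> resp N a j"
proof -
  have later: "k < k'" if "k' \<in> {1..N}" "j \<le> crit a k' + a k'" for k'
    using that j crit_add_eq[of k' a] crit_add_eq[of k a] psum_mono[of k' k a] k
    by (cases "k < k'") auto
  consider (crit) k' where "k' \<in> {1..N}" "j = crit a k'"
    | (stable) k' where "k' \<in> {1..N}" "j \<in> stable_block a k'"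
    | (last) "resp N a j = psum a N"
    unfolding resp_def by metis
  then show ?thesis
  proof cases
    case crit
    then show ?thesis using later[of k'] resp_crit[of k' N a] psum_mono[of k k' a] by simp
  next
    case stable
    then show ?thesis
      using later[of k'] resp_stable[of k' N j a] psum_mono[of k "k' - 1" a]
      by (simp add: stable_block_eq)
  next
    case last
    then show ?thesis using psum_mono[of k N a] k by simp
  qed
qed

lemma bumps_eq_0I:
  assumes "\<And>j. j \<in> {1..numEmp N a} \<Longrightarrow> i < j \<Longrightarrow> endt N a s i \<le> endt N a s j"
  shows "bumps N a s i = 0"
  using assms unfolding bumps_def by (fastforce simp: not_less)

lemma bumps_le_of_raise:
  assumes "\<And>j. s j \<le> t j" and "t i = s i"
  shows "bumps N a t i \<le> bumps N a s i"
  unfolding bumps_def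
proof (rule card_mono)
  show "{j \<in> {1..numEmp N a}. i < j \<and> endt N a t j < endt N a t i}
      \<subseteq> {j \<in> {1..numEmp N a}. i < j \<and> endt N a s j < endt N a s i}"
    using assms unfolding endt_def by (auto intro: le_less_trans[OF add_right_mono])
qed simp

lemma feasibleI:
  assumes "\<And>i. i \<in> {1..numEmp N a} \<Longrightarrow> 0 \<le> s i"
    and "\<And>i j. i \<in> {1..numEmp N a} \<Longrightarrow> j \<in> {1..numEmp N a} \<Longrightarrow> i \<le> j \<Longrightarrow> s i \<le> s j"
    and "\<And>i. i \<in> {1..numEmp N a} \<Longrightarrow> endt N a s i \<le> horizon N a W"
  shows "feasible N a W s"
  using assms unfolding feasible_def by blast

lemma
  assumes "feasible N a W s"
  shows feasible_nonneg: "i \<in> {1..numEmp N a} \<Longrightarrow> 0 \<le> s i"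
    and feasible_mono:
      "i \<in> {1..numEmp N a} \<Longrightarrow> j \<in> {1..numEmp N a} \<Longrightarrow> i \<le> j \<Longrightarrow> s i \<le> s j"
    and feasible_endt_le: "i \<in> {1..numEmp N a} \<Longrightarrow> endt N a s i \<le> horizon N a W"
  using assms unfolding feasible_def by blast+

lemma crit_not_bumps_after_stable_block:
  assumes "k \<in> {1..N}" "crit a k + a k < j" "s (crit a k) \<le> s j"
  shows "endt N a s (crit a k) \<le> endt N a s j"
  using assms resp_crit[of k N a] resp_after_stable_block[of k N a j] unfolding endt_def by simp

lemma bumps_crit_eq_if_stable_block_early:
  assumes feas: "feasible N a W s" and k: "k \<in> {1..N}"
    and early: "s (crit a k + a k) < s (crit a k) + a k"
  shows "bumps N a s (crit a k) = a k"
proof -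
  let ?c = "crit a k" and ?L = "crit a k + a k"
  have block_bounds: "1 \<le> ?c" "?L < numEmp N a"
    using k stable_block_end_less_numEmp[of k N a] unfolding crit_def by auto
  have "{j \<in> {1..numEmp N a}. ?c < j \<and> endt N a s j < endt N a s ?c} = stable_block a k"
  proof (intro equalityI subsetI)
    fix j assume j: "j \<in> {j \<in> {1..numEmp N a}. ?c < j \<and> endt N a s j < endt N a s ?c}"
    have "s ?c \<le> s j" using j block_bounds by (intro feasible_mono[OF feas]) auto
    then show "j \<in> stable_block a k"
      using j crit_not_bumps_after_stable_block[OF k, where j=j and s=s] by (force simp: stable_block_eq)
  next
    fix j assume j: "j \<in> stable_block a k"
    have "s j \<le> s ?L" using j block_bounds by (intro feasible_mono[OF feas]) (auto simp: stable_block_eq)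
    then show "j \<in> {j \<in> {1..numEmp N a}. ?c < j \<and> endt N a s j < endt N a s ?c}"
      using j block_bounds early k resp_stable[OF k j] resp_crit[OF k] psum_pred[of k a]
      unfolding endt_def by (auto simp: stable_block_eq)
  qed
  then show ?thesis unfolding bumps_def by (simp add: stable_block_eq)
qed

definition lift_block :: "(nat \<Rightarrow> nat) \<Rightarrow> nat \<Rightarrow> (nat \<Rightarrow> real) \<Rightarrow> nat \<Rightarrow> real" where
  "lift_block a k s j =
     (if j \<in> stable_block a k then max (s j) (s (crit a k) + a k) else s j)"

locale late_stable_block =
  fixes N W :: nat and a :: "nat \<Rightarrow> nat" and k :: nat and s :: "nat \<Rightarrow> real"
  assumes k_range: "k \<in> {1..N}"
    and feas: "feasible N a W s"
    and late: "s (crit a k) + a k \<le> s (crit a k + a k)"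
begin

abbreviation "c \<equiv> crit a k"
abbreviation "L \<equiv> crit a k + a k"
abbreviation "D \<equiv> stable_block a k"
abbreviation "M \<equiv> numEmp N a"
abbreviation "t \<equiv> lift_block a k s"

lemma block_bounds: "1 \<le> c" "L < M"
  using k_range stable_block_end_less_numEmp[of k N a] unfolding crit_def by auto

lemma le_lift: "s j \<le> t j"
  unfolding lift_block_def by simp

lemma lift_outside: "j \<notin> D \<Longrightarrow> t j = s j"
  unfolding lift_block_def by simp

lemma after_stable_block: "j \<notin> D \<Longrightarrow> i \<in> D \<Longrightarrow> i < j \<Longrightarrow> L < j"
  unfolding stable_block_eq by auto

lemma late_after_stable_block: "j \<in> {1..M} \<Longrightarrow> L < j \<Longrightarrow> s c + a k \<le> s j"
  using late block_bounds feasible_mono[OF feas, of L j] by simp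

lemma lift_mono:
  assumes i: "i \<in> {1..M}" and j: "j \<in> {1..M}" and "i \<le> j"
  shows "t i \<le> t j"
proof -
  have "s i \<le> s j" using feasible_mono[OF feas i j \<open>i \<le> j\<close>] .
  moreover have "s c + a k \<le> s j" if "i \<in> D" "j \<notin> D"
    using that \<open>i \<le> j\<close> after_stable_block[of j i] late_after_stable_block[OF j]
    by (cases "i = j") auto
  ultimately show ?thesis unfolding lift_block_def by auto
qed

lemma endt_lift_stable: "j \<in> D \<Longrightarrow> endt N a t j = t j + psum a (k - 1)"
  unfolding endt_def using resp_stable[OF k_range] by simp

lemma feasible_lift: "feasible N a W t"
proof (rule feasibleI)
  fix i assume i: "i \<in> {1..M}"
  show "0 \<le> t i" using feasible_nonneg[OF feas i] le_lift[of i] by linarith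
  show "endt N a t i \<le> horizon N a W"
  proof (cases "i \<in> D \<and> s i < s c + a k")
    case True
    then have "endt N a t i = endt N a s c"
      using endt_lift_stable[of i] resp_crit[OF k_range] psum_pred[of k a] k_range
      unfolding endt_def lift_block_def by auto
    also have "\<dots> \<le> horizon N a W" using feasible_endt_le[OF feas] block_bounds by simp
    finally show ?thesis .
  next
    case False
    then have "t i = s i" unfolding lift_block_def by auto
    then show ?thesis using feasible_endt_le[OF feas i] unfolding endt_def by simp
  qed
qed (rule lift_mono)

lemma bumps_lift_le: "i \<in> {1..M} \<Longrightarrow> bumps N a t i \<le> bumps N a s i"
proof (cases "i \<in> D")
  case False
  then show ?thesis by (intro bumps_le_of_raise le_lift lift_outside)
next
  case True
  assume i: "i \<in> {1..M}"
  have "endt N a t i \<le> endt N a t j" if j: "j \<in> {1..M}" "i < j" for j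
  proof -
    have "resp N a i \<le> resp N a j"
    proof (cases "j \<in> D")
      case True
      then show ?thesis using resp_stable[OF k_range] \<open>i \<in> D\<close> by simp
    next
      case False
      then show ?thesis
        using resp_stable[OF k_range \<open>i \<in> D\<close>] psum_mono[of "k - 1" k a]
          resp_after_stable_block[OF k_range, of a j] after_stable_block[of j i] \<open>i \<in> D\<close> j
        by simp
    qed
    then show ?thesis using lift_mono[of i j] i j unfolding endt_def by simp
  qed
  then have "bumps N a t i = 0" by (rule bumps_eq_0I)
  then show ?thesis by simp
qed

lemma bumps_lift_crit: "bumps N a t c = 0"
proof (rule bumps_eq_0I)
  fix j assume j: "j \<in> {1..M}" "c < j"
  have tc: "t c = s c" using crit_notin_stable_block block_bounds k_range by (intro lift_outside) simp
  show "endt N a t c \<le> endt N a t j"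
  proof (cases "j \<in> D")
    case True
    then show ?thesis
      using tc endt_lift_stable[OF True] resp_crit[OF k_range] psum_pred[of k a] k_range
      unfolding endt_def lift_block_def by auto
  next
    case False
    then have "L < j" using j by (auto simp: stable_block_eq)
    then show ?thesis
      using tc lift_outside[OF False] late_after_stable_block[OF j(1)]
        crit_not_bumps_after_stable_block[OF k_range, of a j t]
      by simp
  qed
qed

lemma total_bumps_lift_less:
  assumes "bumps N a s c > 0"
  shows "total_bumps N a t < total_bumps N a s"
  unfolding total_bumps_def
proof (rule sum_strict_mono_ex1)
  show "\<exists>i\<in>{1..M}. bumps N a t i < bumps N a s i"
    using assms bumps_lift_crit block_bounds by (intro bexI[of _ c]) auto
qed (use bumps_lift_le in auto)

end

theorem lemma1:
  fixes N W :: nat and a :: "nat \<Rightarrow> nat" and s :: "nat \<Rightarrow> real" and k :: nat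
  assumes "N \<ge> 1"
    and "\<forall>j\<in>{1..N}. a j > 0"
    and "W > 0" and "W \<le> psum a N"
    and "optimal N a W s"
    and "k \<in> {1..N}"
  shows "bumps N a s (crit a k) \<in> {0, a k}"
proof -
  have feas: "feasible N a W s"
    and opt: "\<And>s'. feasible N a W s' \<Longrightarrow> total_bumps N a s \<le> total_bumps N a s'"
    using assms(5) unfolding optimal_def by auto
  show ?thesis
  proof (cases "s (crit a k + a k) < s (crit a k) + a k")
    case True
    then show ?thesis using bumps_crit_eq_if_stable_block_early[OF feas assms(6)] by simp
  next
    case False
    then interpret late_stable_block N W a k s
      using feas assms(6) by unfold_locales simp_all
    show ?thesis
      using total_bumps_lift_less opt[OF feasible_lift] by (cases "bumps N a s c = 0") auto
  qed
qed

end
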